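(* For any thresholds $a_{ij}$, the adaptive matrix SPRT $\hat D=(\hat T,\hat d)$ satisfies $$\sup_{\theta\in\Theta_i}\mathsf P_\theta(\hat d=j)\le e^{-a_{ij}}\quad\text{for all }i,j\in\mathcal N_0,\ i\ne j.$$ In particular, if $a_{ij}=\log(1/\alpha_{ij})$ then $\hat D\in\mathbb C(\boldsymbol\alpha)$.
   Context: Observations $X_1,X_2,\dots$ with probability measures $\{\mathsf P_\theta,\theta\in\Theta\}$, $\Theta\subseteq\mathbb R^l$; $\mathcal F_n=\sigma(X_1,\dots,X_n)$, $\mathbf X_1^n=(X_1,\dots,X_n)$. The restriction of $\mathsf P_\theta$ to $\mathcal F_n$ has density $p_{\theta,n}(\mathbf X_1^n)=\prod_{t=1}^n f_{\theta,t}(X_t\mid\mathbf X_1^{t-1})$ w.r.t. a $\sigma$-finite measure (each $f_{\theta,t}(\cdot\mid\mathbf X_1^{t-1})$ a conditional density), and these restrictions are mutually absolutely continuous across $\theta$. $\Theta$ is the disjoint union of $\Theta_0,\dots,\Theta_N$ ($N\ge1$) and an indifference zone $\Theta_{\rm in}$ (possibly empty); $\mathcal N_0=\{0,\dots,N\}$. A test $D=(T,d)$: stopping time $T$ w.r.t. $(\mathcal F_n)$ and $\mathcal F_T$-measurable $d\in\mathcal N_0$. $\mathbb C(\boldsymbol\alpha)=\{D:\sup_{\theta\in\Theta_i}\mathsf P_\theta(d=j)\le\alpha_{ij}\ \forall i\ne j\}$. Let $\hat\theta_n=\hat\theta_n(\mathbf X_1^n)$ be $\mathcal F_n$-measurable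 estimators with values in $\Theta$, with a deterministic initial value $\hat\theta_0$. Define $\hat\Lambda_i^*(n)=\prod_{t=1}^n f_{\hat\theta_{t-1},t}(X_t\mid\mathbf X_1^{t-1})\big/\sup_{\theta\in\Theta_i}\prod_{t=1}^n f_{\theta,t}(X_t\mid\mathbf X_1^{t-1})$ and $\hat\lambda_i^*(n)=\log\hat\Lambda_i^*(n)$. Adaptive matrix SPRT (AMSPRT): given thresholds $a_{ij}$, $\hat T_i=\inf\{n\ge1:\hat\lambda_j^*(n)\ge a_{ji}\text{ for all }j\in\mathcal N_0\setminus i\}$, $\hat T=\min_k\hat T_k$, $\hat d=i$ if $\hat T=\hat T_i$ (ties broken by any fixed rule). *)

theory Defs
  imports "HOL-Probability.Probability"
begin

text \<open>Observation paths are functions x :: nat => 'a; x t is the observation X_t (t >= 1).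
  The history X_1^{t-1} is represented by restrict x {1..<t}.\<close>

definition lik :: "('p \<Rightarrow> nat \<Rightarrow> (nat \<Rightarrow> 'a) \<Rightarrow> 'a \<Rightarrow> real) \<Rightarrow> 'p \<Rightarrow> nat \<Rightarrow> (nat \<Rightarrow> 'a) \<Rightarrow> ennreal" where
  "lik f \<theta> n x = (\<Prod>t\<in>{1..n}. ennreal (f \<theta> t (restrict x {1..<t}) (x t)))"

definition adapt_lik :: "('p \<Rightarrow> nat \<Rightarrow> (nat \<Rightarrow> 'a) \<Rightarrow> 'a \<Rightarrow> real) \<Rightarrow> (nat \<Rightarrow> (nat \<Rightarrow> 'a) \<Rightarrow> 'p)
    \<Rightarrow> nat \<Rightarrow> (nat \<Rightarrow> 'a) \<Rightarrow> ennreal" where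
  "adapt_lik f est n x =
     (\<Prod>t\<in>{1..n}. ennreal (f (est (t - 1) (restrict x {1..<t})) t (restrict x {1..<t}) (x t)))"

text \<open>hat Lambda_i^*(n) (ennreal division: c/0 = infinity for c > 0, 0/0 = 0)\<close>
definition Lambda_hat :: "('p \<Rightarrow> nat \<Rightarrow> (nat \<Rightarrow> 'a) \<Rightarrow> 'a \<Rightarrow> real) \<Rightarrow> (nat \<Rightarrow> (nat \<Rightarrow> 'a) \<Rightarrow> 'p)
    \<Rightarrow> 'p set \<Rightarrow> nat \<Rightarrow> (nat \<Rightarrow> 'a) \<Rightarrow> ennreal" where
  "Lambda_hat f est \<Theta>i n x = adapt_lik f est n x / (SUP \<theta>\<in>\<Theta>i. lik f \<theta> n x)"

definition ln_ennreal :: "ennreal \<Rightarrow> ereal" where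
  "ln_ennreal y = (if y = 0 then -\<infinity> else if y = \<top> then \<infinity> else ereal (ln (enn2real y)))"

definition lambda_hat :: "('p \<Rightarrow> nat \<Rightarrow> (nat \<Rightarrow> 'a) \<Rightarrow> 'a \<Rightarrow> real) \<Rightarrow> (nat \<Rightarrow> (nat \<Rightarrow> 'a) \<Rightarrow> 'p)
    \<Rightarrow> 'p set \<Rightarrow> nat \<Rightarrow> (nat \<Rightarrow> 'a) \<Rightarrow> ereal" where
  "lambda_hat f est \<Theta>i n x = ln_ennreal (Lambda_hat f est \<Theta>i n x)"

text \<open>hat T_i = inf{n >= 1 : hat lambda_j^*(n) >= a_{ji} for all j in N_0 - {i}}, inf {} = infinity\<close>
definition amsprt_Ti :: "('p \<Rightarrow> nat \<Rightarrow> (nat \<Rightarrow> 'a) \<Rightarrow> 'a \<Rightarrow> real) \<Rightarrow> (nat \<Rightarrow> (nat \<Rightarrow> 'a) \<Rightarrow> 'p)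
    \<Rightarrow> (nat \<Rightarrow> 'p set) \<Rightarrow> nat \<Rightarrow> (nat \<Rightarrow> nat \<Rightarrow> real) \<Rightarrow> nat \<Rightarrow> (nat \<Rightarrow> 'a) \<Rightarrow> enat" where
  "amsprt_Ti f est \<Theta>s N a i x =
     (INF n\<in>{n. 1 \<le> n \<and> (\<forall>j\<in>{0..N} - {i}. lambda_hat f est (\<Theta>s j) n x \<ge> ereal (a j i))}. enat n)"

definition amsprt_T :: "('p \<Rightarrow> nat \<Rightarrow> (nat \<Rightarrow> 'a) \<Rightarrow> 'a \<Rightarrow> real) \<Rightarrow> (nat \<Rightarrow> (nat \<Rightarrow> 'a) \<Rightarrow> 'p)
    \<Rightarrow> (nat \<Rightarrow> 'p set) \<Rightarrow> nat \<Rightarrow> (nat \<Rightarrow> nat \<Rightarrow> real) \<Rightarrow> (nat \<Rightarrow> 'a) \<Rightarrow> enat" where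
  "amsprt_T f est \<Theta>s N a x = Min ((\<lambda>k. amsprt_Ti f est \<Theta>s N a k x) ` {0..N})"

definition amsprt_d :: "(nat set \<Rightarrow> nat) \<Rightarrow> ('p \<Rightarrow> nat \<Rightarrow> (nat \<Rightarrow> 'a) \<Rightarrow> 'a \<Rightarrow> real) \<Rightarrow> (nat \<Rightarrow> (nat \<Rightarrow> 'a) \<Rightarrow> 'p)
    \<Rightarrow> (nat \<Rightarrow> 'p set) \<Rightarrow> nat \<Rightarrow> (nat \<Rightarrow> nat \<Rightarrow> real) \<Rightarrow> (nat \<Rightarrow> 'a) \<Rightarrow> nat" where
  "amsprt_d tb f est \<Theta>s N a x =
     tb {k\<in>{0..N}. amsprt_Ti f est \<Theta>s N a k x = amsprt_T f est \<Theta>s N a x}"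

text \<open>Error-probability condition defining the class C(alpha); decision d = j is only made
  on the event T < infinity.\<close>
definition in_class :: "('p \<Rightarrow> 'o measure) \<Rightarrow> (nat \<Rightarrow> 'p set) \<Rightarrow> nat \<Rightarrow> (nat \<Rightarrow> nat \<Rightarrow> real)
    \<Rightarrow> ('o \<Rightarrow> enat) \<Rightarrow> ('o \<Rightarrow> nat) \<Rightarrow> bool" where
  "in_class P \<Theta>s N \<alpha> T d \<longleftrightarrow>
     (\<forall>i\<in>{0..N}. \<forall>j\<in>{0..N}. i \<noteq> j \<longrightarrow>
        (SUP \<theta>\<in>\<Theta>s i. emeasure (P \<theta>) {\<omega>\<in>space (P \<theta>). T \<omega> < \<infinity> \<and> d \<omega> = j}) \<le> ennreal (\<alpha> i j))"

end

theory Submission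
  imports Defs
begin

(* The estimate est (t - 1) depends only on X_1^{t-1}, so each factor of adapt_lik is a conditional
   density in X_t, and the products adapt_lik n are the consistent finite-dimensional densities of
   one probability measure Q on paths (adaptive_measure).
   If the test decides j while \<theta> \<in> \<Theta>_i, then Lambda_hat_i(n) \<ge> c = exp a_ij for some n, and at the
   first such n the true likelihood lik \<theta> n \<le> sup_{\<Theta>_i} lik n is at most adapt_lik n / c.
   The first-crossing events are disjoint, so P_\<theta>(d = j) \<le> Q(some crossing) / c \<le> 1 / c. *)

lemma borel_measurable_prefix_prod:
  fixes g :: "nat \<Rightarrow> (nat \<Rightarrow> 'a) \<Rightarrow> 'a \<Rightarrow> ennreal"
  assumes g: "\<And>t. 1 \<le> t \<Longrightarrow> (\<lambda>(h, y). g t h y) \<in> borel_measurable (PiM {1..<t} (\<lambda>_. M) \<Otimes>\<^sub>M M)"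
  shows "(\<lambda>x. \<Prod>t\<in>{1..n}. g t (restrict x {1..<t}) (x t)) \<in> borel_measurable (PiM {1..n} (\<lambda>_. M))"
proof (intro borel_measurable_prod_ennreal)
  fix t assume t: "t \<in> {1..n}"
  have "(\<lambda>x. (restrict x {1..<t}, x t)) \<in> PiM {1..n} (\<lambda>_. M) \<rightarrow>\<^sub>M PiM {1..<t} (\<lambda>_. M) \<Otimes>\<^sub>M M"
    using t by (intro measurable_Pair measurable_restrict_subset measurable_component_singleton) auto
  from measurable_compose[OF this g] t
  show "(\<lambda>x. g t (restrict x {1..<t}) (x t)) \<in> borel_measurable (PiM {1..n} (\<lambda>_. M))" by simp
qed

lemma prefix_prod_restrict:
  fixes x :: "nat \<Rightarrow> 'a"
  assumes "k \<le> n"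
  shows "(\<Prod>t\<in>{1..k}. g t (restrict (restrict x {1..n}) {1..<t}) (restrict x {1..n} t))
       = (\<Prod>t\<in>{1..k}. g t (restrict x {1..<t}) (x t))"
proof (rule prod.cong[OF refl])
  fix t assume "t \<in> {1..k}"
  with assms have "t \<in> {1..n}" "{1..n} \<inter> {1..<t} = {1..<t}" by auto
  then show "g t (restrict (restrict x {1..n}) {1..<t}) (restrict x {1..n} t)
      = g t (restrict x {1..<t}) (x t)" by simp
qed

lemma lik_restrict: "k \<le> n \<Longrightarrow> lik f \<theta> k (restrict x {1..n}) = lik f \<theta> k x"
  unfolding lik_def by (rule prefix_prod_restrict)

lemma adapt_lik_restrict: "k \<le> n \<Longrightarrow> adapt_lik f est k (restrict x {1..n}) = adapt_lik f est k x"
  unfolding adapt_lik_def by (rule prefix_prod_restrict)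

lemma Lambda_hat_restrict:
  assumes "k \<le> n"
  shows "Lambda_hat f est \<Theta>i k (restrict x {1..n}) = Lambda_hat f est \<Theta>i k x"
  unfolding Lambda_hat_def adapt_lik_restrict[OF assms] lik_restrict[OF assms] ..

lemma lik_measurable:
  fixes f :: "'p::topological_space \<Rightarrow> nat \<Rightarrow> (nat \<Rightarrow> 'a) \<Rightarrow> 'a \<Rightarrow> real"
  assumes f: "\<And>t. (\<lambda>(\<theta>, h, y). f \<theta> t h y) \<in> borel_measurable (borel \<Otimes>\<^sub>M (PiM {1..<t} (\<lambda>_. M) \<Otimes>\<^sub>M M))"
  shows "lik f \<theta> n \<in> borel_measurable (PiM {1..n} (\<lambda>_. M))"
  unfolding lik_def[abs_def]
proof (rule borel_measurable_prefix_prod)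
  fix t :: nat
  have "(\<lambda>p. (\<theta>, p)) \<in> PiM {1..<t} (\<lambda>_. M) \<Otimes>\<^sub>M M \<rightarrow>\<^sub>M borel \<Otimes>\<^sub>M (PiM {1..<t} (\<lambda>_. M) \<Otimes>\<^sub>M M)"
    by simp
  from measurable_compose[OF this f]
  show "(\<lambda>(h, y). ennreal (f \<theta> t h y)) \<in> borel_measurable (PiM {1..<t} (\<lambda>_. M) \<Otimes>\<^sub>M M)"
    by (simp add: case_prod_beta')
qed

lemma adapt_lik_measurable:
  fixes f :: "'p::topological_space \<Rightarrow> nat \<Rightarrow> (nat \<Rightarrow> 'a) \<Rightarrow> 'a \<Rightarrow> real"
  assumes f: "\<And>t. (\<lambda>(\<theta>, h, y). f \<theta> t h y) \<in> borel_measurable (borel \<Otimes>\<^sub>M (PiM {1..<t} (\<lambda>_. M) \<Otimes>\<^sub>M M))"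
    and est: "\<And>n. est n \<in> PiM {1..n} (\<lambda>_. M) \<rightarrow>\<^sub>M borel"
  shows "adapt_lik f est n \<in> borel_measurable (PiM {1..n} (\<lambda>_. M))"
  unfolding adapt_lik_def[abs_def]
proof (rule borel_measurable_prefix_prod)
  fix t :: nat assume "1 \<le> t"
  then have "{1..t - 1} = {1..<t}" by auto
  with est[of "t - 1"] have "(\<lambda>p. (est (t - 1) (fst p), p))
      \<in> PiM {1..<t} (\<lambda>_. M) \<Otimes>\<^sub>M M \<rightarrow>\<^sub>M borel \<Otimes>\<^sub>M (PiM {1..<t} (\<lambda>_. M) \<Otimes>\<^sub>M M)"
    by simp
  from measurable_compose[OF this f]
  show "(\<lambda>(h, y). ennreal (f (est (t - 1) h) t h y)) \<in> borel_measurable (PiM {1..<t} (\<lambda>_. M) \<Otimes>\<^sub>M M)"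
    by (simp add: case_prod_beta')
qed

lemma adapt_lik_Suc:
  assumes "x \<in> extensional {1..m}"
  shows "adapt_lik f est (Suc m) (x(Suc m := y)) = adapt_lik f est m x * ennreal (f (est m x) (Suc m) x y)"
proof -
  have "restrict (x(Suc m := y)) {1..m} = x" "restrict (x(Suc m := y)) {1..<Suc m} = x"
    using assms by (auto simp: restrict_def extensional_def fun_eq_iff)
  then have "adapt_lik f est m (x(Suc m := y)) = adapt_lik f est m x"
    by (metis adapt_lik_restrict order_refl)
  moreover have "adapt_lik f est (Suc m) z
      = adapt_lik f est m z * ennreal (f (est m (restrict z {1..<Suc m})) (Suc m) (restrict z {1..<Suc m}) (z (Suc m)))"
    for z :: "nat \<Rightarrow> 'a"
    unfolding adapt_lik_def by (simp add: prod.cl_ivl_Suc)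
  ultimately show ?thesis
    using \<open>restrict (x(Suc m := y)) {1..<Suc m} = x\<close> by simp
qed

lemma ennreal_mult_le_of_le_divide:
  fixes c l s A :: ennreal
  assumes "c \<le> A / s" "l \<le> s" "A < \<top>"
  shows "c * l \<le> A"
proof (cases "s = 0 \<or> s = \<top>")
  case True
  with assms show ?thesis by (auto simp: top_unique)
next
  case False
  have "c * l \<le> A / s * s"
    using assms by (intro mult_mono) simp_all
  also have "\<dots> = A"
    using False by (simp add: ennreal_divide_times top.not_eq_extremum)
  finally show ?thesis .
qed

lemma exp_le_of_le_ln_ennreal: "ereal r \<le> ln_ennreal y \<Longrightarrow> ennreal (exp r) \<le> y"
proof (cases "y = 0 \<or> y = \<top>")
  case True
  then show "ereal r \<le> ln_ennreal y \<Longrightarrow> ennreal (exp r) \<le> y"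
    by (auto simp: ln_ennreal_def)
next
  case False
  then have y: "0 < enn2real y" "ennreal (enn2real y) = y"
    by (auto simp: enn2real_positive_iff less_top[symmetric] zero_less_iff_neq_zero)
  assume "ereal r \<le> ln_ennreal y"
  with False have "r \<le> ln (enn2real y)"
    by (simp add: ln_ennreal_def)
  then have "exp r \<le> enn2real y"
    using y(1) by (metis exp_le_cancel_iff exp_ln)
  then show "ennreal (exp r) \<le> y"
    using ennreal_leI y(2) by metis
qed

lemma emeasure_density_le_cmult:
  assumes g: "g \<in> borel_measurable N" and h: "h \<in> borel_measurable N" and A: "A \<in> sets N"
    and le: "\<And>x. x \<in> A \<Longrightarrow> g x \<le> e * h x"
  shows "emeasure (density N g) A \<le> e * emeasure (density N h) A"
proof -
  have "emeasure (density N g) A = (\<integral>\<^sup>+ x. g x * indicator A x \<partial>N)"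
    by (rule emeasure_density[OF g A])
  also have "\<dots> \<le> (\<integral>\<^sup>+ x. e * (h x * indicator A x) \<partial>N)"
    using le by (intro nn_integral_mono) (simp split: split_indicator)
  also have "\<dots> = e * emeasure (density N h) A"
    using h A by (simp add: nn_integral_cmult emeasure_density)
  finally show ?thesis .
qed

definition first_crossing :: "'a measure \<Rightarrow> (nat \<Rightarrow> (nat \<Rightarrow> 'a) \<Rightarrow> ennreal) \<Rightarrow> ennreal \<Rightarrow> nat \<Rightarrow> (nat \<Rightarrow> 'a) set" where
  "first_crossing M L c n = {x \<in> space (PiM {1..n} (\<lambda>_. M)).
     1 \<le> n \<and> c \<le> L n x \<and> (\<forall>k\<in>{1..<n}. \<not> c \<le> L k (restrict x {1..k}))}"

lemma sets_first_crossing: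
  assumes "\<And>k. L k \<in> borel_measurable (PiM {1..k} (\<lambda>_. M))"
  shows "first_crossing M L c n \<in> sets (PiM {1..n} (\<lambda>_. M))"
proof -
  have L: "(\<lambda>x. L k (restrict x {1..k})) \<in> borel_measurable (PiM {1..n} (\<lambda>_. M))" if "k < n" for k
    using that by (intro measurable_compose[OF measurable_restrict_subset assms]) auto
  have "Measurable.pred (PiM {1..n} (\<lambda>_. M))
      (\<lambda>x. 1 \<le> n \<and> c \<le> L n x \<and> (\<forall>k\<in>{1..<n}. \<not> c \<le> L k (restrict x {1..k})))"
    by (intro pred_intros_logic pred_intros_finite pred_const_le[OF assms] pred_const_le[OF L] measurable_const) auto
  then show ?thesis
    unfolding first_crossing_def pred_def .
qed

lemma first_crossing_unique:
  assumes "n < n'" "restrict x {1..n} \<in> first_crossing M L c n" "restrict x {1..n'} \<in> first_crossing M L c n'"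
  shows False
proof -
  have "{1..n'} \<inter> {1..n} = {1..n}"
    using assms(1) by auto
  with assms show False
    by (auto simp: first_crossing_def)
qed

lemma first_crossing_exists:
  assumes x: "\<And>t. x t \<in> space M" and prefix: "\<And>k x. L k (restrict x {1..k}) = L k x"
    and crossing: "1 \<le> n" "c \<le> L n x"
  shows "\<exists>n. restrict x {1..n} \<in> first_crossing M L c n"
proof -
  define n0 where "n0 = (LEAST n. 1 \<le> n \<and> c \<le> L n x)"
  have "1 \<le> n0" "c \<le> L n0 x"
    using LeastI[of "\<lambda>n. 1 \<le> n \<and> c \<le> L n x"] crossing unfolding n0_def by auto
  moreover have "\<not> c \<le> L k x" if "1 \<le> k" "k < n0" for k
    using not_less_Least[of k "\<lambda>n. 1 \<le> n \<and> c \<le> L n x"] that unfolding n0_def by auto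
  moreover have "restrict x {1..n0} \<in> space (PiM {1..n0} (\<lambda>_. M))"
    using x by (simp add: space_PiM)
  moreover have "\<not> c \<le> L k (restrict (restrict x {1..n0}) {1..k})" if "k \<in> {1..<n0}" for k
  proof -
    from that have "restrict (restrict x {1..n0}) {1..k} = restrict x {1..k}"
      by (auto simp: Int_absorb1)
    then have "L k (restrict (restrict x {1..n0}) {1..k}) = L k x"
      by (simp only: prefix)
    with that \<open>\<And>k. 1 \<le> k \<Longrightarrow> k < n0 \<Longrightarrow> \<not> c \<le> L k x\<close> show ?thesis
      by simp
  qed
  moreover have "L n0 (restrict x {1..n0}) = L n0 x"
    by (rule prefix)
  ultimately have "restrict x {1..n0} \<in> first_crossing M L c n0"
    unfolding first_crossing_def by simp
  then show ?thesis ..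
qed

lemma adapt_lik_less_top: "adapt_lik f est n x < \<top>"
  unfolding adapt_lik_def by (simp add: ennreal_prod_eq_top less_top[symmetric])

lemma lik_le_adapt_lik:
  assumes "\<theta> \<in> \<Theta>i" "ennreal c \<le> Lambda_hat f est \<Theta>i n x" "0 < c"
  shows "lik f \<theta> n x \<le> ennreal (1 / c) * adapt_lik f est n x"
proof -
  have "ennreal c * lik f \<theta> n x \<le> adapt_lik f est n x"
    using assms(1,2) unfolding Lambda_hat_def
    by (intro ennreal_mult_le_of_le_divide[OF _ SUP_upper adapt_lik_less_top])
  then have "ennreal (1 / c) * (ennreal c * lik f \<theta> n x) \<le> ennreal (1 / c) * adapt_lik f est n x"
    by (rule mult_left_mono) simp
  moreover have "ennreal (1 / c) * ennreal c = 1"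
    using \<open>0 < c\<close> by (simp flip: ennreal_mult)
  ultimately show ?thesis
    by (simp add: mult.assoc[symmetric])
qed

lemma amsprt_d_stopping_condition:
  assumes T: "amsprt_T f est \<Theta>s N a x < \<infinity>" and tb: "\<forall>S. S \<noteq> {} \<longrightarrow> tb S \<in> S"
  shows "\<exists>n\<ge>1. \<forall>j\<in>{0..N} - {amsprt_d tb f est \<Theta>s N a x}.
    ereal (a j (amsprt_d tb f est \<Theta>s N a x)) \<le> lambda_hat f est (\<Theta>s j) n x"
proof -
  let ?T = "amsprt_T f est \<Theta>s N a x" and ?d = "amsprt_d tb f est \<Theta>s N a x"
  define S where "S = {k \<in> {0..N}. amsprt_Ti f est \<Theta>s N a k x = ?T}"
  have "?T \<in> (\<lambda>k. amsprt_Ti f est \<Theta>s N a k x) ` {0..N}"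
    unfolding amsprt_T_def by (rule Min_in) auto
  then have "S \<noteq> {}"
    unfolding S_def by auto
  with tb have "tb S \<in> S"
    by blast
  then have "?d \<in> S"
    unfolding amsprt_d_def S_def .
  with T have "amsprt_Ti f est \<Theta>s N a ?d x \<noteq> \<top>"
    unfolding S_def by (simp add: top_enat_def)
  then show ?thesis
    unfolding amsprt_Ti_def by (rule contrapos_np) auto
qed

locale adaptive_likelihood =
  fixes M :: "'a measure"
    and \<nu> :: "nat \<Rightarrow> 'a measure"
    and f :: "'p::topological_space \<Rightarrow> nat \<Rightarrow> (nat \<Rightarrow> 'a) \<Rightarrow> 'a \<Rightarrow> real"
    and \<Theta> :: "'p set"
    and est :: "nat \<Rightarrow> (nat \<Rightarrow> 'a) \<Rightarrow> 'p"
  assumes sigma_finite_nu: "\<And>t. sigma_finite_measure (\<nu> t)"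
    and sets_nu: "\<And>t. sets (\<nu> t) = sets M"
    and f_measurable: "\<And>t. (\<lambda>(\<theta>, h, y). f \<theta> t h y)
          \<in> borel_measurable (borel \<Otimes>\<^sub>M (PiM {1..<t} (\<lambda>_. M) \<Otimes>\<^sub>M M))"
    and f_cond_density: "\<And>\<theta> t h. \<theta> \<in> \<Theta> \<Longrightarrow> h \<in> space (PiM {1..<t} (\<lambda>_. M)) \<Longrightarrow>
          (\<integral>\<^sup>+ y. ennreal (f \<theta> t h y) \<partial>\<nu> t) = 1"
    and est_measurable: "\<And>n. est n \<in> PiM {1..n} (\<lambda>_. M) \<rightarrow>\<^sub>M borel"
    and est_in: "\<And>n h. h \<in> space (PiM {1..n} (\<lambda>_. M)) \<Longrightarrow> est n h \<in> \<Theta>"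
begin

sublocale product_sigma_finite \<nu>
  by (simp add: product_sigma_finite_def sigma_finite_nu)

lemma sets_PiM_nu: "sets (PiM I \<nu>) = sets (PiM I (\<lambda>_. M))"
  by (rule sets_PiM_cong) (simp_all add: sets_nu)

lemma space_PiM_nu: "space (PiM I \<nu>) = space (PiM I (\<lambda>_. M))"
  by (rule sets_eq_imp_space_eq[OF sets_PiM_nu])

lemma adapt_lik_measurable_nu: "adapt_lik f est n \<in> borel_measurable (PiM {1..n} \<nu>)"
  using adapt_lik_measurable[OF f_measurable est_measurable] by (simp add: measurable_cong_sets[OF sets_PiM_nu])

definition adaptive_measure :: "nat \<Rightarrow> (nat \<Rightarrow> 'a) measure" where
  "adaptive_measure n = density (PiM {1..n} \<nu>) (adapt_lik f est n)"

lemma nn_integral_adapt_lik_Suc: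
  assumes x: "x \<in> space (PiM {1..m} (\<lambda>_. M))"
  shows "(\<integral>\<^sup>+ y. adapt_lik f est (Suc m) (x(Suc m := y)) \<partial>\<nu> (Suc m)) = adapt_lik f est m x"
proof -
  have x_hist: "x \<in> space (PiM {1..<Suc m} (\<lambda>_. M))"
    using x by (simp add: atLeastLessThanSuc_atLeastAtMost)
  then have "(\<lambda>y. (est m x, x, y)) \<in> M \<rightarrow>\<^sub>M borel \<Otimes>\<^sub>M (PiM {1..<Suc m} (\<lambda>_. M) \<Otimes>\<^sub>M M)"
    by simp
  from measurable_compose[OF this f_measurable]
  have "(\<lambda>y. ennreal (f (est m x) (Suc m) x y)) \<in> borel_measurable (\<nu> (Suc m))"
    by (simp add: measurable_cong_sets[OF sets_nu])
  moreover have "x \<in> extensional {1..m}"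
    using x by (simp add: space_PiM PiE_def)
  ultimately have "(\<integral>\<^sup>+ y. adapt_lik f est (Suc m) (x(Suc m := y)) \<partial>\<nu> (Suc m))
      = adapt_lik f est m x * (\<integral>\<^sup>+ y. ennreal (f (est m x) (Suc m) x y) \<partial>\<nu> (Suc m))"
    by (simp add: adapt_lik_Suc nn_integral_cmult)
  also have "\<dots> = adapt_lik f est m x"
    using f_cond_density[OF est_in[OF x] x_hist] by simp
  finally show ?thesis .
qed

lemma sets_restrict_prefix:
  assumes "n \<le> m" "A \<in> sets (PiM {1..n} (\<lambda>_. M))"
  shows "{x \<in> space (PiM {1..m} \<nu>). restrict x {1..n} \<in> A} \<in> sets (PiM {1..m} \<nu>)"
proof -
  have "(\<lambda>x. restrict x {1..n}) \<in> PiM {1..m} \<nu> \<rightarrow>\<^sub>M PiM {1..n} (\<lambda>_. M)"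
    using assms(1) by (simp add: measurable_cong_sets[OF sets_PiM_nu refl] measurable_restrict_subset)
  from measurable_sets[OF this assms(2)] show ?thesis
    by (simp add: vimage_def Int_def conj_commute)
qed

lemma emeasure_adaptive_measure_Suc:
  assumes A: "A \<in> sets (PiM {1..m} (\<lambda>_. M))"
  shows "emeasure (adaptive_measure (Suc m)) {x \<in> space (PiM {1..Suc m} \<nu>). restrict x {1..m} \<in> A}
       = emeasure (adaptive_measure m) A"
proof -
  define S where "S = {x \<in> space (PiM (insert (Suc m) {1..m}) \<nu>). restrict x {1..m} \<in> A}"
  have Suc_eq: "{1..Suc m} = insert (Suc m) {1..m}" by auto
  have S: "S \<in> sets (PiM (insert (Suc m) {1..m}) \<nu>)"
    unfolding S_def Suc_eq[symmetric] by (rule sets_restrict_prefix[OF _ A]) simp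
  have adapt_lik_Suc_measurable: "adapt_lik f est (Suc m) \<in> borel_measurable (PiM (insert (Suc m) {1..m}) \<nu>)"
    using adapt_lik_measurable_nu[of "Suc m"] by (simp only: Suc_eq)
  have indicator_S: "indicator S (x(Suc m := y)) = (indicator A x :: ennreal)"
    if "x \<in> space (PiM {1..m} \<nu>)" "y \<in> space (\<nu> (Suc m))" for x y
  proof -
    have "restrict (x(Suc m := y)) {1..m} = x"
      using that(1) by (auto simp: space_PiM PiE_def extensional_def restrict_def fun_eq_iff)
    moreover have "x(Suc m := y) \<in> space (PiM (insert (Suc m) {1..m}) \<nu>)"
      using that by (auto simp: space_PiM PiE_def extensional_def Pi_def)
    ultimately show ?thesis by (simp add: S_def indicator_def)
  qed
  have "emeasure (adaptive_measure (Suc m)) S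
      = (\<integral>\<^sup>+ x. adapt_lik f est (Suc m) x * indicator S x \<partial>PiM (insert (Suc m) {1..m}) \<nu>)"
    unfolding adaptive_measure_def Suc_eq by (rule emeasure_density[OF adapt_lik_Suc_measurable S])
  also have "\<dots> = (\<integral>\<^sup>+ x. (\<integral>\<^sup>+ y. adapt_lik f est (Suc m) (x(Suc m := y)) * indicator S (x(Suc m := y))
      \<partial>\<nu> (Suc m)) \<partial>PiM {1..m} \<nu>)"
    using S adapt_lik_Suc_measurable by (intro product_nn_integral_insert) simp_all
  also have "\<dots> = (\<integral>\<^sup>+ x. adapt_lik f est m x * indicator A x \<partial>PiM {1..m} \<nu>)"
  proof (rule nn_integral_cong)
    fix x assume x: "x \<in> space (PiM {1..m} \<nu>)"
    have "(\<integral>\<^sup>+ y. adapt_lik f est (Suc m) (x(Suc m := y)) * indicator S (x(Suc m := y)) \<partial>\<nu> (Suc m))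
        = (\<integral>\<^sup>+ y. adapt_lik f est (Suc m) (x(Suc m := y)) * indicator A x \<partial>\<nu> (Suc m))"
      using x by (intro nn_integral_cong) (simp add: indicator_S)
    also have "\<dots> = adapt_lik f est m x * indicator A x"
      using measurable_compose[OF measurable_component_update[OF x] adapt_lik_Suc_measurable] x
      by (simp add: nn_integral_multc nn_integral_adapt_lik_Suc space_PiM_nu)
    finally show "(\<integral>\<^sup>+ y. adapt_lik f est (Suc m) (x(Suc m := y)) * indicator S (x(Suc m := y)) \<partial>\<nu> (Suc m))
        = adapt_lik f est m x * indicator A x" .
  qed
  also have "\<dots> = emeasure (adaptive_measure m) A"
    unfolding adaptive_measure_def
    using emeasure_density[OF adapt_lik_measurable_nu, of A m] A by (simp add: sets_PiM_nu)
  finally show ?thesis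
    unfolding S_def Suc_eq .
qed

lemma emeasure_adaptive_measure_restrict:
  assumes "n \<le> m" "A \<in> sets (PiM {1..n} (\<lambda>_. M))"
  shows "emeasure (adaptive_measure m) {x \<in> space (PiM {1..m} \<nu>). restrict x {1..n} \<in> A}
       = emeasure (adaptive_measure n) A"
  using assms(1)
proof (induction m rule: dec_induct)
  case base
  have "restrict x {1..n} = x" if "x \<in> space (PiM {1..n} \<nu>)" for x
    using that by (simp add: space_PiM PiE_def extensional_restrict)
  then have "{x \<in> space (PiM {1..n} \<nu>). restrict x {1..n} \<in> A} = A"
    using sets.sets_into_space[OF assms(2)] by (auto simp: space_PiM_nu)
  then show ?case by (simp only:)
next
  case (step m)
  define A' where "A' = {x \<in> space (PiM {1..m} \<nu>). restrict x {1..n} \<in> A}"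
  have A': "A' \<in> sets (PiM {1..m} (\<lambda>_. M))"
    unfolding A'_def sets_PiM_nu[symmetric] by (rule sets_restrict_prefix[OF step(1) assms(2)])
  have "restrict (restrict x {1..m}) {1..n} = restrict x {1..n}" for x :: "nat \<Rightarrow> 'a"
    using step(1) by (auto simp: restrict_def)
  then have "{x \<in> space (PiM {1..Suc m} \<nu>). restrict x {1..n} \<in> A}
      = {x \<in> space (PiM {1..Suc m} \<nu>). restrict x {1..m} \<in> A'}"
    unfolding A'_def by (auto simp: space_PiM)
  then have "emeasure (adaptive_measure (Suc m)) {x \<in> space (PiM {1..Suc m} \<nu>). restrict x {1..n} \<in> A}
      = emeasure (adaptive_measure (Suc m)) {x \<in> space (PiM {1..Suc m} \<nu>). restrict x {1..m} \<in> A'}"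
    by (simp only:)
  also have "\<dots> = emeasure (adaptive_measure m) A'"
    by (rule emeasure_adaptive_measure_Suc[OF A'])
  also have "\<dots> = emeasure (adaptive_measure n) A"
    unfolding A'_def by (rule step.IH)
  finally show ?case .
qed

lemma prob_space_adaptive_measure: "prob_space (adaptive_measure m)"
proof
  have "emeasure (adaptive_measure m) {x \<in> space (PiM {1..m} \<nu>). restrict x {1..0} \<in> space (PiM {1..0} (\<lambda>_. M))}
      = emeasure (adaptive_measure 0) (space (PiM {1..0} (\<lambda>_. M)))"
    by (rule emeasure_adaptive_measure_restrict) simp_all
  moreover have "{x \<in> space (PiM {1..m} \<nu>). restrict x {1..0} \<in> space (PiM {1..0} (\<lambda>_. M))}
      = space (adaptive_measure m)"
    by (auto simp: adaptive_measure_def space_PiM_empty)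
  moreover have "adapt_lik f est 0 = (\<lambda>_. 1)"
    by (simp add: adapt_lik_def fun_eq_iff)
  ultimately show "emeasure (adaptive_measure m) (space (adaptive_measure m)) = 1"
    by (simp add: adaptive_measure_def PiM_empty emeasure_density_const)
qed

lemma suminf_emeasure_adaptive_measure_le_1:
  assumes B: "\<And>n. B n \<in> sets (PiM {1..n} (\<lambda>_. M))"
    and disjoint: "\<And>x n n'. n < n' \<Longrightarrow> restrict x {1..n} \<in> B n \<Longrightarrow> restrict x {1..n'} \<in> B n' \<Longrightarrow> False"
  shows "(\<Sum>n. emeasure (adaptive_measure n) (B n)) \<le> 1"
  unfolding suminf_eq_SUP
proof (rule SUP_least)
  fix m
  interpret Q: prob_space "adaptive_measure m"
    by (rule prob_space_adaptive_measure)
  define C where "C n = {x \<in> space (PiM {1..m} \<nu>). restrict x {1..n} \<in> B n}" for n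
  have C: "C n \<in> sets (adaptive_measure m)" if "n < m" for n
    using sets_restrict_prefix[OF _ B, of n m] that by (simp add: C_def adaptive_measure_def)
  have "disjoint_family_on C {..<m}"
    unfolding disjoint_family_on_def
  proof (intro ballI impI)
    fix n n' :: nat assume "n \<noteq> n'"
    then show "C n \<inter> C n' = {}"
      using disjoint[of n n'] disjoint[of n' n] by (cases "n < n'") (auto simp: C_def)
  qed
  then have "(\<Sum>n<m. emeasure (adaptive_measure m) (C n)) = emeasure (adaptive_measure m) (\<Union>n<m. C n)"
    using C by (intro sum_emeasure) auto
  also have "\<dots> \<le> 1"
    by (rule Q.emeasure_le_1)
  finally show "(\<Sum>n<m. emeasure (adaptive_measure n) (B n)) \<le> 1"
    using emeasure_adaptive_measure_restrict[OF _ B] by (simp add: C_def)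
qed

lemma Lambda_hat_measurable:
  assumes "(\<lambda>x. SUP \<theta>\<in>\<Theta>i. lik f \<theta> n x) \<in> borel_measurable (PiM {1..n} (\<lambda>_. M))"
  shows "Lambda_hat f est \<Theta>i n \<in> borel_measurable (PiM {1..n} (\<lambda>_. M))"
  unfolding Lambda_hat_def[abs_def]
  by (intro borel_measurable_divide_ennreal adapt_lik_measurable[OF f_measurable est_measurable] assms)

lemma sets_Lambda_hat_crossing:
  assumes X: "\<And>t. X t \<in> P \<rightarrow>\<^sub>M M"
    and sup_lik: "\<And>n. (\<lambda>x. SUP \<theta>\<in>\<Theta>i. lik f \<theta> n x) \<in> borel_measurable (PiM {1..n} (\<lambda>_. M))"
  shows "{\<omega> \<in> space P. \<exists>n\<ge>1. c \<le> Lambda_hat f est \<Theta>i n (\<lambda>t. X t \<omega>)} \<in> sets P"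
proof -
  have "(\<lambda>\<omega>. Lambda_hat f est \<Theta>i n (restrict (\<lambda>t. X t \<omega>) {1..n})) \<in> borel_measurable P" for n
    using X by (intro measurable_compose[OF measurable_restrict Lambda_hat_measurable[OF sup_lik]]) auto
  then have [measurable]: "(\<lambda>\<omega>. Lambda_hat f est \<Theta>i n (\<lambda>t. X t \<omega>)) \<in> borel_measurable P" for n
    by (simp only: Lambda_hat_restrict[OF order_refl])
  show ?thesis
    by measurable
qed

lemma emeasure_lik_le_adaptive_measure:
  assumes A: "A \<in> sets (PiM {1..n} (\<lambda>_. M))"
    and crossing: "\<And>x. x \<in> A \<Longrightarrow> ennreal c \<le> Lambda_hat f est \<Theta>i n x"
    and \<theta>: "\<theta> \<in> \<Theta>i" and c: "0 < c"
  shows "emeasure (density (PiM {1..n} \<nu>) (lik f \<theta> n)) A \<le> ennreal (1 / c) * emeasure (adaptive_measure n) A"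
  unfolding adaptive_measure_def
proof (rule emeasure_density_le_cmult)
  show "lik f \<theta> n \<in> borel_measurable (PiM {1..n} \<nu>)"
    using lik_measurable[OF f_measurable] by (simp add: measurable_cong_sets[OF sets_PiM_nu])
  show "A \<in> sets (PiM {1..n} \<nu>)"
    using A by (simp only: sets_PiM_nu)
  show "lik f \<theta> n x \<le> ennreal (1 / c) * adapt_lik f est n x" if "x \<in> A" for x
    using \<theta> crossing[OF that] c by (rule lik_le_adapt_lik)
qed (rule adapt_lik_measurable_nu)

lemma emeasure_Lambda_hat_crossing_le:
  fixes c :: real
  assumes X: "\<And>t. X t \<in> P \<rightarrow>\<^sub>M M"
    and distr_X: "\<And>n. distr P (PiM {1..n} (\<lambda>_. M)) (\<lambda>\<omega>. restrict (\<lambda>t. X t \<omega>) {1..n})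
      = density (PiM {1..n} \<nu>) (lik f \<theta> n)"
    and sup_lik: "\<And>n. (\<lambda>x. SUP \<theta>\<in>\<Theta>i. lik f \<theta> n x) \<in> borel_measurable (PiM {1..n} (\<lambda>_. M))"
    and \<theta>: "\<theta> \<in> \<Theta>i" and c: "0 < c"
  shows "emeasure P {\<omega> \<in> space P. \<exists>n\<ge>1. ennreal c \<le> Lambda_hat f est \<Theta>i n (\<lambda>t. X t \<omega>)} \<le> ennreal (1 / c)"
proof -
  define B where "B = first_crossing M (Lambda_hat f est \<Theta>i) (ennreal c)"
  define Y where "Y n \<omega> = restrict (\<lambda>t. X t \<omega>) {1..n}" for n \<omega>
  define G where "G n = Y n -` B n \<inter> space P" for n
  have Y: "Y n \<in> P \<rightarrow>\<^sub>M PiM {1..n} (\<lambda>_. M)" for n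
    unfolding Y_def by (rule measurable_restrict) (simp add: X)
  have B: "B n \<in> sets (PiM {1..n} (\<lambda>_. M))" for n
    unfolding B_def by (intro sets_first_crossing Lambda_hat_measurable sup_lik)
  have G: "G n \<in> sets P" for n
    unfolding G_def by (rule measurable_sets[OF Y B])
  have "{\<omega> \<in> space P. \<exists>n\<ge>1. ennreal c \<le> Lambda_hat f est \<Theta>i n (\<lambda>t. X t \<omega>)} \<subseteq> (\<Union>n. G n)"
  proof safe
    fix \<omega> n assume \<omega>: "\<omega> \<in> space P" and "1 \<le> n" "ennreal c \<le> Lambda_hat f est \<Theta>i n (\<lambda>t. X t \<omega>)"
    then obtain n' where "Y n' \<omega> \<in> B n'"
      using first_crossing_exists[where x="\<lambda>t. X t \<omega>" and L="Lambda_hat f est \<Theta>i"]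
        measurable_space[OF X \<omega>] Lambda_hat_restrict[OF order_refl]
      unfolding B_def Y_def by blast
    with \<omega> show "\<omega> \<in> (\<Union>n. G n)"
      unfolding G_def by blast
  qed
  then have "emeasure P {\<omega> \<in> space P. \<exists>n\<ge>1. ennreal c \<le> Lambda_hat f est \<Theta>i n (\<lambda>t. X t \<omega>)}
      \<le> (\<Sum>n. emeasure P (G n))"
    using G by (intro order_trans[OF emeasure_mono emeasure_subadditive_countably]) auto
  also have "\<dots> \<le> (\<Sum>n. ennreal (1 / c) * emeasure (adaptive_measure n) (B n))"
  proof (intro suminf_le summableI)
    fix n
    have "emeasure P (G n) = emeasure (density (PiM {1..n} \<nu>) (lik f \<theta> n)) (B n)"
      using emeasure_distr[OF Y B] distr_X unfolding G_def Y_def by simp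
    also have "\<dots> \<le> ennreal (1 / c) * emeasure (adaptive_measure n) (B n)"
      by (rule emeasure_lik_le_adaptive_measure[OF B _ \<theta> c]) (simp add: B_def first_crossing_def)
    finally show "emeasure P (G n) \<le> ennreal (1 / c) * emeasure (adaptive_measure n) (B n)" .
  qed
  also have "\<dots> = ennreal (1 / c) * (\<Sum>n. emeasure (adaptive_measure n) (B n))"
    by (rule ennreal_suminf_cmult)
  also have "\<dots> \<le> ennreal (1 / c)"
  proof -
    have "\<And>x n n'. n < n' \<Longrightarrow> restrict x {1..n} \<in> B n \<Longrightarrow> restrict x {1..n'} \<in> B n' \<Longrightarrow> False"
      unfolding B_def by (rule first_crossing_unique)
    from mult_left_mono[OF suminf_emeasure_adaptive_measure_le_1[OF B this]] show ?thesis
      by simp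
  qed
  finally show ?thesis .
qed

lemma emeasure_amsprt_error_le:
  assumes X: "\<And>t. X t \<in> P \<rightarrow>\<^sub>M M"
    and distr_X: "\<And>n. distr P (PiM {1..n} (\<lambda>_. M)) (\<lambda>\<omega>. restrict (\<lambda>t. X t \<omega>) {1..n})
      = density (PiM {1..n} \<nu>) (lik f \<theta> n)"
    and sup_lik: "\<And>n. (\<lambda>x. SUP \<theta>\<in>\<Theta>s i. lik f \<theta> n x) \<in> borel_measurable (PiM {1..n} (\<lambda>_. M))"
    and \<theta>: "\<theta> \<in> \<Theta>s i" and i: "i \<in> {0..N}" "i \<noteq> j"
    and tb: "\<forall>S. S \<noteq> {} \<longrightarrow> tb S \<in> S"
  shows "emeasure P {\<omega> \<in> space P.
    amsprt_T f est \<Theta>s N a (\<lambda>t. X t \<omega>) < \<infinity> \<and> amsprt_d tb f est \<Theta>s N a (\<lambda>t. X t \<omega>) = j}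
    \<le> ennreal (exp (- a i j))"
proof -
  let ?crossing = "{\<omega> \<in> space P. \<exists>n\<ge>1. ennreal (exp (a i j)) \<le> Lambda_hat f est (\<Theta>s i) n (\<lambda>t. X t \<omega>)}"
  have "{\<omega> \<in> space P. amsprt_T f est \<Theta>s N a (\<lambda>t. X t \<omega>) < \<infinity> \<and> amsprt_d tb f est \<Theta>s N a (\<lambda>t. X t \<omega>) = j}
      \<subseteq> ?crossing"
  proof
    fix \<omega> assume "\<omega> \<in> {\<omega> \<in> space P.
      amsprt_T f est \<Theta>s N a (\<lambda>t. X t \<omega>) < \<infinity> \<and> amsprt_d tb f est \<Theta>s N a (\<lambda>t. X t \<omega>) = j}"
    then have \<omega>: "\<omega> \<in> space P" "amsprt_T f est \<Theta>s N a (\<lambda>t. X t \<omega>) < \<infinity>"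
      and d: "amsprt_d tb f est \<Theta>s N a (\<lambda>t. X t \<omega>) = j"
      by auto
    from amsprt_d_stopping_condition[OF \<omega>(2) tb] obtain n
      where "1 \<le> n" "ereal (a i j) \<le> lambda_hat f est (\<Theta>s i) n (\<lambda>t. X t \<omega>)"
      unfolding d using i by blast
    with \<omega>(1) show "\<omega> \<in> ?crossing"
      unfolding lambda_hat_def by (blast intro: exp_le_of_le_ln_ennreal)
  qed
  moreover have "?crossing \<in> sets P"
    by (rule sets_Lambda_hat_crossing[OF X sup_lik])
  ultimately have "emeasure P {\<omega> \<in> space P.
      amsprt_T f est \<Theta>s N a (\<lambda>t. X t \<omega>) < \<infinity> \<and> amsprt_d tb f est \<Theta>s N a (\<lambda>t. X t \<omega>) = j}
      \<le> emeasure P ?crossing"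
    by (rule emeasure_mono)
  also have "\<dots> \<le> ennreal (1 / exp (a i j))"
    by (rule emeasure_Lambda_hat_crossing_le[OF X distr_X sup_lik \<theta>]) simp
  finally show ?thesis
    by (simp add: exp_minus inverse_eq_divide)
qed

end

theorem lemma2:
  fixes P :: "real^'l \<Rightarrow> 'o measure"
    and X :: "nat \<Rightarrow> 'o \<Rightarrow> 'a"
    and M :: "'a measure"
    and \<nu> :: "nat \<Rightarrow> 'a measure"
    and f :: "real^'l \<Rightarrow> nat \<Rightarrow> (nat \<Rightarrow> 'a) \<Rightarrow> 'a \<Rightarrow> real"
    and \<Theta> \<Theta>in :: "(real^'l) set"
    and \<Theta>s :: "nat \<Rightarrow> (real^'l) set"
    and N :: nat
    and est :: "nat \<Rightarrow> (nat \<Rightarrow> 'a) \<Rightarrow> real^'l"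
    and a :: "nat \<Rightarrow> nat \<Rightarrow> real"
    and tb :: "nat set \<Rightarrow> nat"
  assumes N_ge: "N \<ge> 1"
    and Theta_union: "\<Theta> = \<Theta>in \<union> (\<Union>i\<in>{0..N}. \<Theta>s i)"
    and Theta_disj: "\<forall>i\<in>{0..N}. \<forall>j\<in>{0..N}. i \<noteq> j \<longrightarrow> \<Theta>s i \<inter> \<Theta>s j = {}"
    and Theta_in_disj: "\<forall>i\<in>{0..N}. \<Theta>s i \<inter> \<Theta>in = {}"
    and prob: "\<forall>\<theta>\<in>\<Theta>. prob_space (P \<theta>)"
    and X_meas: "\<forall>\<theta>\<in>\<Theta>. \<forall>t. X t \<in> P \<theta> \<rightarrow>\<^sub>M M"
    and nu_sf: "\<forall>t. sigma_finite_measure (\<nu> t) \<and> sets (\<nu> t) = sets M"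
    and f_nonneg: "\<forall>\<theta> t h x. 0 \<le> f \<theta> t h x"
    and f_meas: "\<forall>t. (\<lambda>(\<theta>, h, x). f \<theta> t h x)
                   \<in> borel_measurable (borel \<Otimes>\<^sub>M (PiM {1..<t} (\<lambda>_. M) \<Otimes>\<^sub>M M))"
    and f_cond_density: "\<forall>\<theta>\<in>\<Theta>. \<forall>t. \<forall>h\<in>space (PiM {1..<t} (\<lambda>_. M)).
                   (\<integral>\<^sup>+ x. ennreal (f \<theta> t h x) \<partial>\<nu> t) = 1"
    and density: "\<forall>\<theta>\<in>\<Theta>. \<forall>n. distr (P \<theta>) (PiM {1..n} (\<lambda>_. M)) (\<lambda>\<omega>. restrict (\<lambda>t. X t \<omega>) {1..n})
                   = density (PiM {1..n} \<nu>) (lik f \<theta> n)"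
    and mutual_ac: "\<forall>\<theta>\<in>\<Theta>. \<forall>\<theta>'\<in>\<Theta>. \<forall>n.
                   absolutely_continuous (distr (P \<theta>') (PiM {1..n} (\<lambda>_. M)) (\<lambda>\<omega>. restrict (\<lambda>t. X t \<omega>) {1..n}))
                     (distr (P \<theta>) (PiM {1..n} (\<lambda>_. M)) (\<lambda>\<omega>. restrict (\<lambda>t. X t \<omega>) {1..n}))"
    and est_meas: "\<forall>n. est n \<in> PiM {1..n} (\<lambda>_. M) \<rightarrow>\<^sub>M borel"
    and est_range: "\<forall>n y. est n y \<in> \<Theta>"
    and sup_meas: "\<forall>i\<in>{0..N}. \<forall>n. (\<lambda>x. SUP \<theta>\<in>\<Theta>s i. lik f \<theta> n x) \<in> borel_measurable (PiM {1..n} (\<lambda>_. M))"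
    and tb_rule: "\<forall>S. S \<noteq> {} \<longrightarrow> tb S \<in> S"
  shows "(\<forall>i\<in>{0..N}. \<forall>j\<in>{0..N}. i \<noteq> j \<longrightarrow>
            (SUP \<theta>\<in>\<Theta>s i. emeasure (P \<theta>)
               {\<omega>\<in>space (P \<theta>). amsprt_T f est \<Theta>s N a (\<lambda>t. X t \<omega>) < \<infinity>
                               \<and> amsprt_d tb f est \<Theta>s N a (\<lambda>t. X t \<omega>) = j})
            \<le> ennreal (exp (- a i j)))
         \<and> (\<forall>\<alpha>. (\<forall>i\<in>{0..N}. \<forall>j\<in>{0..N}. i \<noteq> j \<longrightarrow> 0 < \<alpha> i j \<and> a i j = ln (1 / \<alpha> i j)) \<longrightarrow>
              in_class P \<Theta>s N \<alpha> (\<lambda>\<omega>. amsprt_T f est \<Theta>s N a (\<lambda>t. X t \<omega>))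
                                 (\<lambda>\<omega>. amsprt_d tb f est \<Theta>s N a (\<lambda>t. X t \<omega>)))"
proof -
  interpret adaptive_likelihood M \<nu> f \<Theta> est
    by (rule adaptive_likelihood.intro) (use nu_sf f_meas f_cond_density est_meas est_range in simp_all)
  define err where "err \<theta> j = {\<omega> \<in> space (P \<theta>).
    amsprt_T f est \<Theta>s N a (\<lambda>t. X t \<omega>) < \<infinity> \<and> amsprt_d tb f est \<Theta>s N a (\<lambda>t. X t \<omega>) = j}" for \<theta> j
  have err_bound: "emeasure (P \<theta>) (err \<theta> j) \<le> ennreal (exp (- a i j))"
    if "i \<in> {0..N}" "i \<noteq> j" "\<theta> \<in> \<Theta>s i" for i j \<theta>
  proof -
    from that Theta_union have "\<theta> \<in> \<Theta>"
      by auto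
    with that show ?thesis
      unfolding err_def using X_meas density sup_meas tb_rule by (intro emeasure_amsprt_error_le) auto
  qed
  show ?thesis
    unfolding err_def[symmetric] in_class_def
  proof (intro conjI allI impI ballI SUP_least)
    fix i j \<theta> assume "i \<in> {0..N}" "j \<in> {0..N}" "i \<noteq> j" "\<theta> \<in> \<Theta>s i"
    then show "emeasure (P \<theta>) (err \<theta> j) \<le> ennreal (exp (- a i j))"
      by (intro err_bound) auto
  next
    fix \<alpha> i j \<theta>
    assume \<alpha>: "\<forall>i\<in>{0..N}. \<forall>j\<in>{0..N}. i \<noteq> j \<longrightarrow> 0 < \<alpha> i j \<and> a i j = ln (1 / \<alpha> i j)"
      and ij: "i \<in> {0..N}" "j \<in> {0..N}" "i \<noteq> j" and \<theta>: "\<theta> \<in> \<Theta>s i"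
    from \<alpha> ij have "0 < \<alpha> i j" "a i j = ln (1 / \<alpha> i j)"
      by auto
    then have "exp (- a i j) = \<alpha> i j"
      by (simp add: ln_div)
    with err_bound[of i j \<theta>] ij \<theta> show "emeasure (P \<theta>) (err \<theta> j) \<le> ennreal (\<alpha> i j)"
      by simp
  qed
qed

end
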